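(* Let $G=(V,E)$ with colouring $f$ satisfy $|B|>|R|$. Let $E^*$ be the set of pairs $\{u,v\}\notin E$ ($u\neq v$) with at least one of $u,v$ blue. Define $b^*(v)=\max(r(v)-b(v),0)$ for $v\in R$ and $b^*(v)=b(v)-r(v)$ for $v\in B$. Consider the integer program (IP-1a) in variables $y_e$, $e\in E^*$: maximize $-\sum_{e\in E^*}y_e$ subject to $\sum_{u\in N_{E^*}(v)\cap B}y_{uv}=b^*(v)$ for all $v\in R$; $-\sum_{u\in N_{E^*}(v)\cap B}y_{uv}+\sum_{u\in N_{E^*}(v)\cap R}y_{uv}\le b^*(v)$ for all $v\in B$; $y_e\in\{0,1\}$ for all $e\in E^*$. Then a set $Y\subseteq E^*$ has indicator vector optimal for (IP-1a) if and only if $E\cup Y$ is an optimal solution to the MIAE problem on $(G,f)$; moreover every optimal MIAE solution $E'$ satisfies $E'\setminus E\subseteq E^*$, and the optimal value of (IP-1a) equals $-\min|E'\setminus E|$ over MIAE-feasible $E'$.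
   Context: Graphs are finite, simple and undirected; $B,R$ are the blue and red nodes under $f:V\to\{B,R\}$; $b(v),r(v)$ are the numbers of blue and red neighbours of $v$ in $G$; $N_{E^*}(v)=\{u:\{u,v\}\in E^*\}$. A node is under illusion in $(V,E')$ if it has strictly more red than blue neighbours there. An optimal solution to MIAE is an edge set $E'\supseteq E$ on $V$ such that no node is under illusion in $(V,E')$ and $|E'\setminus E|$ is minimum among all such sets. *)

theory Defs
  imports Main
begin

datatype colour = Blue | Red

definition edges_on :: "'a set \<Rightarrow> 'a set set \<Rightarrow> bool" where
  "edges_on V F \<longleftrightarrow> (\<forall>e\<in>F. \<exists>u v. e = {u, v} \<and> u \<noteq> v \<and> u \<in> V \<and> v \<in> V)"

definition simple_graph :: "'a set \<Rightarrow> 'a set set \<Rightarrow> bool" where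
  "simple_graph V E \<longleftrightarrow> finite V \<and> edges_on V E"

definition blues :: "'a set \<Rightarrow> ('a \<Rightarrow> colour) \<Rightarrow> 'a set" where
  "blues V f = {v \<in> V. f v = Blue}"

definition reds :: "'a set \<Rightarrow> ('a \<Rightarrow> colour) \<Rightarrow> 'a set" where
  "reds V f = {v \<in> V. f v = Red}"

definition nbrs :: "'a set set \<Rightarrow> 'a \<Rightarrow> 'a set" where
  "nbrs F v = {u. {u, v} \<in> F}"

definition blue_deg :: "('a \<Rightarrow> colour) \<Rightarrow> 'a set set \<Rightarrow> 'a \<Rightarrow> nat" where
  "blue_deg f F v = card {u \<in> nbrs F v. f u = Blue}"

definition red_deg :: "('a \<Rightarrow> colour) \<Rightarrow> 'a set set \<Rightarrow> 'a \<Rightarrow> nat" where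
  "red_deg f F v = card {u \<in> nbrs F v. f u = Red}"

definition under_illusion :: "('a \<Rightarrow> colour) \<Rightarrow> 'a set set \<Rightarrow> 'a \<Rightarrow> bool" where
  "under_illusion f F v \<longleftrightarrow> red_deg f F v > blue_deg f F v"

definition miae_feasible :: "'a set \<Rightarrow> 'a set set \<Rightarrow> ('a \<Rightarrow> colour) \<Rightarrow> 'a set set \<Rightarrow> bool" where
  "miae_feasible V E f E' \<longleftrightarrow> E \<subseteq> E' \<and> edges_on V E' \<and> (\<forall>v\<in>V. \<not> under_illusion f E' v)"

definition miae_optimal :: "'a set \<Rightarrow> 'a set set \<Rightarrow> ('a \<Rightarrow> colour) \<Rightarrow> 'a set set \<Rightarrow> bool" where
  "miae_optimal V E f E' \<longleftrightarrow> miae_feasible V E f E' \<and>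
     (\<forall>E''. miae_feasible V E f E'' \<longrightarrow> card (E' - E) \<le> card (E'' - E))"

definition Estar :: "'a set \<Rightarrow> 'a set set \<Rightarrow> ('a \<Rightarrow> colour) \<Rightarrow> 'a set set" where
  "Estar V E f = {{u, v} | u v. u \<in> V \<and> v \<in> V \<and> u \<noteq> v \<and> {u, v} \<notin> E \<and> (f u = Blue \<or> f v = Blue)}"

definition bstar :: "'a set set \<Rightarrow> ('a \<Rightarrow> colour) \<Rightarrow> 'a \<Rightarrow> int" where
  "bstar E f v = (if f v = Red
      then max (int (red_deg f E v) - int (blue_deg f E v)) 0
      else int (blue_deg f E v) - int (red_deg f E v))"

text \<open>(IP-1a): variables y_e for e in E* (values outside E* are irrelevant).\<close>
definition ip_feasible :: "'a set \<Rightarrow> 'a set set \<Rightarrow> ('a \<Rightarrow> colour) \<Rightarrow> ('a set \<Rightarrow> int) \<Rightarrow> bool" where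
  "ip_feasible V E f y \<longleftrightarrow>
     (\<forall>v\<in>reds V f.
        (\<Sum>u\<in>nbrs (Estar V E f) v \<inter> blues V f. y {u, v}) = bstar E f v) \<and>
     (\<forall>v\<in>blues V f.
        - (\<Sum>u\<in>nbrs (Estar V E f) v \<inter> blues V f. y {u, v})
        + (\<Sum>u\<in>nbrs (Estar V E f) v \<inter> reds V f. y {u, v}) \<le> bstar E f v) \<and>
     (\<forall>e\<in>Estar V E f. y e \<in> {0, 1})"

definition ip_objective :: "'a set \<Rightarrow> 'a set set \<Rightarrow> ('a \<Rightarrow> colour) \<Rightarrow> ('a set \<Rightarrow> int) \<Rightarrow> int" where
  "ip_objective V E f y = - (\<Sum>e\<in>Estar V E f. y e)"

definition ip_optimal :: "'a set \<Rightarrow> 'a set set \<Rightarrow> ('a \<Rightarrow> colour) \<Rightarrow> ('a set \<Rightarrow> int) \<Rightarrow> bool" where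
  "ip_optimal V E f y \<longleftrightarrow> ip_feasible V E f y \<and>
     (\<forall>y'. ip_feasible V E f y' \<longrightarrow> ip_objective V E f y' \<le> ip_objective V E f y)"

definition indic :: "'a set set \<Rightarrow> 'a set \<Rightarrow> int" where
  "indic Y e = (if e \<in> Y then 1 else 0)"

end

theory Submission imports Defs begin

text \<open>
  For \<open>Y \<subseteq> E*\<close> the constraints of (IP-1a) on \<open>indic Y\<close> say exactly that no node of
  \<open>E \<union> Y\<close> is under illusion and that no red node receives more new blue neighbours than
  its deficit \<open>b*(v)\<close>. Conversely, any feasible \<open>E'\<close> can be thinned to such a \<open>Y\<close>:
  added edges outside \<open>E*\<close> join two red nodes and only hurt, and in an inclusion-minimal
  feasible \<open>Y\<close> a red node with a blue surplus could drop one of its new blue-red edges.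
  Hence optimal IP solutions and optimal MIAE solutions correspond and have the same cost;
  an optimum exists because joining every node to all blue nodes is feasible when \<open>|B| > |R|\<close>.
\<close>

definition colour_deg :: "('a \<Rightarrow> colour) \<Rightarrow> 'a set set \<Rightarrow> colour \<Rightarrow> 'a \<Rightarrow> nat" where
  "colour_deg f F c v = card {u \<in> nbrs F v. f u = c}"

lemma blue_deg_eq_colour_deg: "blue_deg f F v = colour_deg f F Blue v"
  by (simp add: blue_deg_def colour_deg_def)

lemma red_deg_eq_colour_deg: "red_deg f F v = colour_deg f F Red v"
  by (simp add: red_deg_def colour_deg_def)

lemma edges_on_nbrs: "edges_on V F \<Longrightarrow> u \<in> nbrs F v \<Longrightarrow> u \<in> V \<and> u \<noteq> v"
  unfolding edges_on_def nbrs_def by (auto simp: doubleton_eq_iff)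

lemma edges_on_finite: "finite V \<Longrightarrow> edges_on V F \<Longrightarrow> finite F"
  unfolding edges_on_def by (rule finite_subset[of _ "Pow V"]) auto

lemma edges_on_Un: "edges_on V A \<Longrightarrow> edges_on V B \<Longrightarrow> edges_on V (A \<union> B)"
  unfolding edges_on_def by blast

lemma edges_on_subset: "edges_on V A \<Longrightarrow> B \<subseteq> A \<Longrightarrow> edges_on V B"
  unfolding edges_on_def by blast

lemma finite_colour_nbrs: "finite V \<Longrightarrow> edges_on V F \<Longrightarrow> finite {u \<in> nbrs F v. f u = c}"
  by (rule finite_subset[of _ V]) (auto dest: edges_on_nbrs)

lemma colour_deg_Un_disjoint:
  assumes "finite V" "edges_on V F" "edges_on V F'" "F \<inter> F' = {}"
  shows "colour_deg f (F \<union> F') c v = colour_deg f F c v + colour_deg f F' c v"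
proof -
  have "{u \<in> nbrs (F \<union> F') v. f u = c} = {u \<in> nbrs F v. f u = c} \<union> {u \<in> nbrs F' v. f u = c}"
    by (auto simp: nbrs_def)
  moreover have "{u \<in> nbrs F v. f u = c} \<inter> {u \<in> nbrs F' v. f u = c} = {}"
    using assms(4) by (auto simp: nbrs_def)
  ultimately show ?thesis
    unfolding colour_deg_def
    by (simp add: card_Un_disjoint finite_colour_nbrs[OF assms(1,2)] finite_colour_nbrs[OF assms(1,3)])
qed

lemma colour_deg_mono:
  "finite V \<Longrightarrow> edges_on V F' \<Longrightarrow> F \<subseteq> F' \<Longrightarrow> colour_deg f F c v \<le> colour_deg f F' c v"
  unfolding colour_deg_def by (rule card_mono[OF finite_colour_nbrs]) (auto simp: nbrs_def)

lemma nbrs_Diff_edge: "nbrs (F - {{u, v}}) w = nbrs F w - {x. {x, w} = {u, v}}"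
  by (auto simp: nbrs_def)

lemma colour_deg_Diff_edge_other:
  assumes "u \<noteq> v" "\<not> (w = v \<and> f u = c)" "\<not> (w = u \<and> f v = c)"
  shows "colour_deg f (F - {{u, v}}) c w = colour_deg f F c w"
proof -
  have "{x \<in> nbrs (F - {{u, v}}) w. f x = c} = {x \<in> nbrs F w. f x = c}"
    using assms by (auto simp: nbrs_Diff_edge doubleton_eq_iff)
  then show ?thesis by (simp add: colour_deg_def)
qed

lemma colour_deg_Diff_edge_endpoint:
  assumes "finite V" "edges_on V F" "{u, v} \<in> F" "u \<noteq> v"
  shows "Suc (colour_deg f (F - {{u, v}}) (f u) v) = colour_deg f F (f u) v"
proof -
  have "{x \<in> nbrs (F - {{u, v}}) v. f x = f u} = {x \<in> nbrs F v. f x = f u} - {u}"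
    using assms(4) by (auto simp: nbrs_Diff_edge doubleton_eq_iff)
  moreover have "u \<in> {x \<in> nbrs F v. f x = f u}"
    using assms(3) by (simp add: nbrs_def)
  ultimately show ?thesis
    unfolding colour_deg_def
    by (metis card_Suc_Diff1 finite_colour_nbrs[OF assms(1,2)])
qed

lemma no_illusion_Diff_edge:
  assumes "finite V" "edges_on V F" "\<forall>w\<in>V. \<not> under_illusion f F w"
    and "{u, v} \<in> F" "f u = Blue" "f v = Red" "red_deg f F v < blue_deg f F v"
  shows "\<forall>w\<in>V. \<not> under_illusion f (F - {{u, v}}) w"
proof
  fix w assume "w \<in> V"
  have uv: "u \<noteq> v" using assms(5,6) by auto
  have red_le: "colour_deg f (F - {{u, v}}) Red w \<le> colour_deg f F Red w"
    by (rule colour_deg_mono[OF assms(1,2)]) auto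
  show "\<not> under_illusion f (F - {{u, v}}) w"
  proof (cases "w = v")
    case True
    have "Suc (colour_deg f (F - {{u, v}}) Blue v) = colour_deg f F Blue v"
      using colour_deg_Diff_edge_endpoint[OF assms(1,2,4) uv, of f] assms(5) by simp
    with True red_le assms(7) show ?thesis
      by (simp add: under_illusion_def red_deg_eq_colour_deg blue_deg_eq_colour_deg)
  next
    case False
    then have "colour_deg f (F - {{u, v}}) Blue w = colour_deg f F Blue w"
      using assms(6) uv by (intro colour_deg_Diff_edge_other) auto
    with red_le assms(3) \<open>w \<in> V\<close> show ?thesis
      by (auto simp: under_illusion_def red_deg_eq_colour_deg blue_deg_eq_colour_deg)
  qed
qed

lemma Estar_edges_on: "edges_on V (Estar V E f)"
  unfolding edges_on_def Estar_def by auto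

lemma Estar_disjoint: "Estar V E f \<inter> E = {}"
  unfolding Estar_def by auto

lemma Un_Estar_Diff: "Y \<subseteq> Estar V E f \<Longrightarrow> (E \<union> Y) - E = Y"
  using Estar_disjoint[of V E f] by blast

lemma finite_Estar: "finite V \<Longrightarrow> finite (Estar V E f)"
  by (rule edges_on_finite[OF _ Estar_edges_on])

lemma Estar_blue_endpoint: "{u, v} \<in> Estar V E f \<Longrightarrow> f u = Blue \<or> f v = Blue"
proof -
  assume "{u, v} \<in> Estar V E f"
  then obtain a b where "{u, v} = {a, b}" "f a = Blue \<or> f b = Blue"
    unfolding Estar_def by auto
  then show ?thesis by (auto simp: doubleton_eq_iff)
qed

lemma Estar_memI:
  "u \<in> V \<Longrightarrow> v \<in> V \<Longrightarrow> u \<noteq> v \<Longrightarrow> {u, v} \<notin> E \<Longrightarrow> f u = Blue \<Longrightarrow> {u, v} \<in> Estar V E f"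
  unfolding Estar_def by blast

lemma Estar_red_colour_deg:
  assumes "Y \<subseteq> Estar V E f" "f v = Red"
  shows "colour_deg f Y Red v = 0"
proof -
  have "{u \<in> nbrs Y v. f u = Red} = {}"
    using assms Estar_blue_endpoint[of _ v V E f] by (fastforce simp: nbrs_def)
  then show ?thesis unfolding colour_deg_def by (metis card.empty)
qed

lemma sum_indic_nbrs_Estar:
  assumes "finite V" "Y \<subseteq> Estar V E f"
  shows "(\<Sum>u\<in>nbrs (Estar V E f) v \<inter> {u \<in> V. f u = c}. indic Y {u, v}) = int (colour_deg f Y c v)"
proof -
  let ?N = "nbrs (Estar V E f) v \<inter> {u \<in> V. f u = c}"
  have "finite ?N"
    using assms(1) by simp
  then have "(\<Sum>u\<in>?N. indic Y {u, v}) = int (card (?N \<inter> {u. {u, v} \<in> Y}))"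
    by (simp add: indic_def sum.If_cases)
  also have "?N \<inter> {u. {u, v} \<in> Y} = {u \<in> nbrs Y v. f u = c}"
    using assms(2) edges_on_nbrs[OF edges_on_subset[OF Estar_edges_on assms(2)], of _ v]
    by (auto simp: nbrs_def)
  finally show ?thesis by (simp add: colour_deg_def)
qed

lemma ip_objective_indic:
  assumes "finite V" "Y \<subseteq> Estar V E f"
  shows "ip_objective V E f (indic Y) = - int (card Y)"
  using assms finite_Estar[OF assms(1)]
  by (simp add: ip_objective_def indic_def sum.If_cases Int_absorb1)

lemma ip_feasible_support:
  assumes "finite V" "ip_feasible V E f y"
  defines "Y \<equiv> {e \<in> Estar V E f. y e = 1}"
  shows "ip_feasible V E f (indic Y)" and "ip_objective V E f y = - int (card Y)"
proof -
  have agree: "\<forall>e\<in>Estar V E f. y e = indic Y e"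
    using assms(2) by (auto simp: Y_def indic_def ip_feasible_def)
  then have "\<And>v X. (\<Sum>u\<in>nbrs (Estar V E f) v \<inter> X. y {u, v}) = (\<Sum>u\<in>nbrs (Estar V E f) v \<inter> X. indic Y {u, v})"
    by (intro sum.cong) (auto simp: nbrs_def)
  with agree assms(2) show "ip_feasible V E f (indic Y)"
    by (simp add: ip_feasible_def)
  have "ip_objective V E f y = ip_objective V E f (indic Y)"
    unfolding ip_objective_def using agree by simp
  then show "ip_objective V E f y = - int (card Y)"
    using ip_objective_indic[OF assms(1)] by (simp add: Y_def)
qed

lemma colour_deg_Un_Estar:
  assumes "simple_graph V E" "Y \<subseteq> Estar V E f"
  shows "colour_deg f (E \<union> Y) c v = colour_deg f E c v + colour_deg f Y c v"
proof (rule colour_deg_Un_disjoint)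
  show "finite V" "edges_on V E"
    using assms(1) by (auto simp: simple_graph_def)
  show "edges_on V Y"
    by (rule edges_on_subset[OF Estar_edges_on assms(2)])
  show "E \<inter> Y = {}"
    using assms(2) Estar_disjoint[of V E f] by blast
qed

lemma ip_feasible_indic_iff:
  assumes "simple_graph V E" "Y \<subseteq> Estar V E f"
  shows "ip_feasible V E f (indic Y) \<longleftrightarrow>
    miae_feasible V E f (E \<union> Y) \<and> (\<forall>v\<in>reds V f. int (colour_deg f Y Blue v) \<le> bstar E f v)"
proof -
  have fV: "finite V" and eE: "edges_on V E"
    using assms(1) by (auto simp: simple_graph_def)
  have eY: "edges_on V Y"
    by (rule edges_on_subset[OF Estar_edges_on assms(2)])
  have "ip_feasible V E f (indic Y) \<longleftrightarrow>
      (\<forall>v\<in>V. f v = Red \<longrightarrow> int (colour_deg f Y Blue v) = bstar E f v) \<and>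
      (\<forall>v\<in>V. f v = Blue \<longrightarrow>
         int (colour_deg f Y Red v) - int (colour_deg f Y Blue v) \<le> bstar E f v)"
    unfolding ip_feasible_def blues_def reds_def sum_indic_nbrs_Estar[OF fV assms(2)]
    by (auto simp: indic_def)
  also have "\<dots> \<longleftrightarrow> (\<forall>v\<in>V. colour_deg f E Red v + colour_deg f Y Red v
        \<le> colour_deg f E Blue v + colour_deg f Y Blue v) \<and>
      (\<forall>v\<in>reds V f. int (colour_deg f Y Blue v) \<le> bstar E f v)"
  proof -
    have "(f v = Red \<longrightarrow> int (colour_deg f Y Blue v) = bstar E f v) \<and>
        (f v = Blue \<longrightarrow> int (colour_deg f Y Red v) - int (colour_deg f Y Blue v) \<le> bstar E f v)
      \<longleftrightarrow> colour_deg f E Red v + colour_deg f Y Red v \<le> colour_deg f E Blue v + colour_deg f Y Blue v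
        \<and> (f v = Red \<longrightarrow> int (colour_deg f Y Blue v) \<le> bstar E f v)" for v
      using Estar_red_colour_deg[OF assms(2), of v]
      by (cases "f v") (auto simp: bstar_def red_deg_eq_colour_deg blue_deg_eq_colour_deg max_def)
    then show ?thesis by (auto simp: reds_def)
  qed
  also have "\<dots> \<longleftrightarrow> miae_feasible V E f (E \<union> Y) \<and>
      (\<forall>v\<in>reds V f. int (colour_deg f Y Blue v) \<le> bstar E f v)"
    using edges_on_Un[OF eE eY]
    by (auto simp: miae_feasible_def under_illusion_def not_less colour_deg_Un_Estar[OF assms]
        red_deg_eq_colour_deg blue_deg_eq_colour_deg)
  finally show ?thesis .
qed

lemma miae_feasible_restrict_Estar:
  assumes "simple_graph V E" "miae_feasible V E f E'"
  shows "miae_feasible V E f (E \<union> (E' - E) \<inter> Estar V E f)"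
proof -
  let ?F = "E \<union> (E' - E) \<inter> Estar V E f"
  have fV: "finite V" and eE: "edges_on V E" and eE': "edges_on V E'" and EE': "E \<subseteq> E'"
    using assms by (auto simp: simple_graph_def miae_feasible_def)
  have eF: "edges_on V ?F"
    by (rule edges_on_Un[OF eE edges_on_subset[OF Estar_edges_on]]) blast
  have "\<not> under_illusion f ?F v" if "v \<in> V" for v
  proof -
    \<comment> \<open>an edge of \<open>E' - E\<close> at a blue vertex lies in \<open>E*\<close>, so no blue neighbour is lost\<close>
    have "{u \<in> nbrs E' v. f u = Blue} \<subseteq> {u \<in> nbrs ?F v. f u = Blue}"
      using edges_on_nbrs[OF eE'] Estar_memI[of _ V v E f] \<open>v \<in> V\<close> by (auto simp: nbrs_def)
    then have "blue_deg f E' v \<le> blue_deg f ?F v"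
      unfolding blue_deg_def by (rule card_mono[OF finite_colour_nbrs[OF fV eF]])
    moreover have "red_deg f ?F v \<le> red_deg f E' v"
      unfolding red_deg_eq_colour_deg by (rule colour_deg_mono[OF fV eE']) (use EE' in blast)
    moreover have "\<not> under_illusion f E' v"
      using assms(2) \<open>v \<in> V\<close> by (simp add: miae_feasible_def)
    ultimately show ?thesis by (simp add: under_illusion_def)
  qed
  with eF show ?thesis by (simp add: miae_feasible_def)
qed

lemma ip_feasible_indic_if_minimal:
  assumes "simple_graph V E" "Y \<subseteq> Estar V E f" "miae_feasible V E f (E \<union> Y)"
    and "\<And>Y'. Y' \<subset> Y \<Longrightarrow> \<not> miae_feasible V E f (E \<union> Y')"
  shows "ip_feasible V E f (indic Y)"
proof -
  have fV: "finite V" and eEY: "edges_on V (E \<union> Y)"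
    using assms(1,3) by (auto simp: simple_graph_def miae_feasible_def)
  have "int (colour_deg f Y Blue v) \<le> bstar E f v" if v: "v \<in> reds V f" for v
  proof (rule ccontr)
    assume "\<not> int (colour_deg f Y Blue v) \<le> bstar E f v"
    then have more_blue: "red_deg f (E \<union> Y) v < blue_deg f (E \<union> Y) v"
      and "colour_deg f Y Blue v \<noteq> 0"
      using v Estar_red_colour_deg[OF assms(2), of v]
      by (auto simp: bstar_def reds_def red_deg_eq_colour_deg blue_deg_eq_colour_deg
          colour_deg_Un_Estar[OF assms(1,2)])
    then have "{u \<in> nbrs Y v. f u = Blue} \<noteq> {}"
      unfolding colour_deg_def by (metis card.empty)
    then obtain u where u: "{u, v} \<in> Y" "f u = Blue"
      by (auto simp: nbrs_def)
    have "\<forall>w\<in>V. \<not> under_illusion f (E \<union> Y - {{u, v}}) w"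
      using assms(3) u v more_blue
      by (intro no_illusion_Diff_edge[OF fV eEY]) (auto simp: miae_feasible_def reds_def)
    moreover have "E \<union> Y - {{u, v}} = E \<union> (Y - {{u, v}})"
      using u(1) assms(2) Estar_disjoint[of V E f] by blast
    moreover have "edges_on V (E \<union> (Y - {{u, v}}))"
      by (rule edges_on_subset[OF eEY]) blast
    ultimately have "miae_feasible V E f (E \<union> (Y - {{u, v}}))"
      by (simp add: miae_feasible_def)
    moreover have "Y - {{u, v}} \<subset> Y"
      using u(1) by blast
    ultimately show False
      using assms(4) by blast
  qed
  with assms(3) show ?thesis
    unfolding ip_feasible_indic_iff[OF assms(1,2)] by blast
qed

lemma miae_feasible_obtain_ip_feasible_indic:
  assumes "simple_graph V E" "miae_feasible V E f E'"
  obtains Y where "Y \<subseteq> Estar V E f" "Y \<subseteq> E' - E" "ip_feasible V E f (indic Y)"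
proof -
  let ?S = "(E' - E) \<inter> Estar V E f"
  let ?P = "\<lambda>Y. Y \<subseteq> ?S \<and> miae_feasible V E f (E \<union> Y)"
  have fS: "finite ?S"
    using assms(1) finite_Estar[of V E f] by (simp add: simple_graph_def)
  obtain Y where Y: "Y \<subseteq> ?S" "miae_feasible V E f (E \<union> Y)"
    and least: "\<forall>Y'. ?P Y' \<longrightarrow> card Y \<le> card Y'"
    using ex_has_least_nat[of ?P ?S card] miae_feasible_restrict_Estar[OF assms] by auto
  have "\<not> miae_feasible V E f (E \<union> Y')" if "Y' \<subset> Y" for Y'
  proof
    assume "miae_feasible V E f (E \<union> Y')"
    then have "card Y \<le> card Y'"
      using least that Y(1) by blast
    moreover have "card Y' < card Y"
      by (rule psubset_card_mono[OF finite_subset[OF Y(1) fS] that])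
    ultimately show False
      by simp
  qed
  then have "ip_feasible V E f (indic Y)"
    using Y by (intro ip_feasible_indic_if_minimal[OF assms(1)]) auto
  with Y(1) show thesis
    by (intro that) auto
qed

lemma miae_feasible_Un_Estar:
  assumes "simple_graph V E" "card (reds V f) < card (blues V f)"
  shows "miae_feasible V E f (E \<union> Estar V E f)"
proof -
  let ?F = "E \<union> Estar V E f"
  have fV: "finite V" and eF: "edges_on V ?F"
    using assms(1) edges_on_Un[OF _ Estar_edges_on] by (auto simp: simple_graph_def)
  have "\<not> under_illusion f ?F v" if v: "v \<in> V" for v
  proof -
    have "{u \<in> nbrs ?F v. f u = Blue} = blues V f - {v}"
      using edges_on_nbrs[OF eF] Estar_memI[of _ V v E f] v by (auto simp: blues_def nbrs_def)
    moreover have "{u \<in> nbrs ?F v. f u = Red} \<subseteq> reds V f - {v}"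
      using edges_on_nbrs[OF eF] by (auto simp: reds_def)
    moreover have "card (reds V f - {v}) \<le> card (blues V f - {v})"
    proof (cases "f v")
      case Blue
      then have "v \<in> blues V f" "v \<notin> reds V f"
        using v by (auto simp: blues_def reds_def)
      with assms(2) show ?thesis by simp
    next
      case Red
      then have "v \<notin> blues V f"
        by (simp add: blues_def)
      with assms(2) card_Diff1_le[of "reds V f" v] show ?thesis by simp
    qed
    ultimately show ?thesis
      using card_mono[of "reds V f - {v}" "{u \<in> nbrs ?F v. f u = Red}"] fV
      by (simp add: under_illusion_def blue_deg_def red_deg_def reds_def)
  qed
  with eF show ?thesis
    by (simp add: miae_feasible_def)
qed

lemma miae_optimal_exists:
  assumes "miae_feasible V E f E'"
  shows "\<exists>E''. miae_optimal V E f E''"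
  using ex_has_least_nat[of "miae_feasible V E f" E' "\<lambda>E''. card (E'' - E)"] assms
  unfolding miae_optimal_def by blast

lemma finite_miae_costs:
  assumes "finite V"
  shows "finite {card (E' - E) | E'. miae_feasible V E f E'}"
proof (rule finite_subset[of _ "{..card (Pow V)}"])
  have "card (E' - E) \<le> card (Pow V)" if "edges_on V E'" for E'
    using that assms by (intro card_mono) (auto simp: edges_on_def)
  then show "{card (E' - E) | E'. miae_feasible V E f E'} \<subseteq> {..card (Pow V)}"
    by (auto simp: miae_feasible_def)
qed simp

lemma ip_optimal_iff:
  assumes "simple_graph V E"
  shows "ip_optimal V E f y \<longleftrightarrow> ip_feasible V E f y \<and>
    (\<forall>E'. miae_feasible V E f E' \<longrightarrow> - ip_objective V E f y \<le> int (card (E' - E)))"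
proof -
  have fV: "finite V"
    using assms by (simp add: simple_graph_def)
  have lower_bound: "- ip_objective V E f y \<le> int (card (E' - E))"
    if opt: "ip_optimal V E f y" and E': "miae_feasible V E f E'" for E'
  proof -
    obtain Y where Y: "Y \<subseteq> Estar V E f" "Y \<subseteq> E' - E" "ip_feasible V E f (indic Y)"
      using miae_feasible_obtain_ip_feasible_indic[OF assms E'] .
    have "finite (E' - E)"
      using E' edges_on_finite[OF fV] by (auto simp: miae_feasible_def)
    then have "card Y \<le> card (E' - E)"
      using Y(2) by (rule card_mono)
    moreover have "ip_objective V E f (indic Y) \<le> ip_objective V E f y"
      using opt Y(3) by (simp add: ip_optimal_def)
    ultimately show ?thesis
      using ip_objective_indic[OF fV Y(1)] by simp
  qed
  have optimal: "ip_objective V E f y' \<le> ip_objective V E f y"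
    if bound: "\<forall>E'. miae_feasible V E f E' \<longrightarrow> - ip_objective V E f y \<le> int (card (E' - E))"
      and y': "ip_feasible V E f y'" for y'
  proof -
    let ?Y = "{e \<in> Estar V E f. y' e = 1}"
    have "miae_feasible V E f (E \<union> ?Y)"
      using ip_feasible_support(1)[OF fV y'] ip_feasible_indic_iff[OF assms, of ?Y] by blast
    with bound have "- ip_objective V E f y \<le> int (card ((E \<union> ?Y) - E))"
      by blast
    also have "(E \<union> ?Y) - E = ?Y"
      by (rule Un_Estar_Diff) blast
    finally have "- ip_objective V E f y \<le> int (card ?Y)" .
    then show ?thesis
      using ip_feasible_support(2)[OF fV y'] by simp
  qed
  show ?thesis
    using lower_bound optimal by (auto simp: ip_optimal_def)
qed

lemma ip_optimal_indic_iff_miae_optimal: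
  assumes "simple_graph V E" "Y \<subseteq> Estar V E f"
  shows "ip_optimal V E f (indic Y) \<longleftrightarrow> miae_optimal V E f (E \<union> Y)"
proof -
  have fV: "finite V"
    using assms(1) by (simp add: simple_graph_def)
  let ?minimal = "\<forall>E'. miae_feasible V E f E' \<longrightarrow> card Y \<le> card (E' - E)"
  have "ip_feasible V E f (indic Y) \<longleftrightarrow> miae_feasible V E f (E \<union> Y)" if ?minimal
  proof
    assume "miae_feasible V E f (E \<union> Y)"
    then obtain Y' where Y': "Y' \<subseteq> Estar V E f" "Y' \<subseteq> (E \<union> Y) - E" "ip_feasible V E f (indic Y')"
      by (rule miae_feasible_obtain_ip_feasible_indic[OF assms(1)])
    have "miae_feasible V E f (E \<union> Y')"
      using ip_feasible_indic_iff[OF assms(1) Y'(1)] Y'(3) by blast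
    with that have "card Y \<le> card Y'"
      using Un_Estar_Diff[OF Y'(1)] by auto
    then have "Y' = Y"
      using card_seteq[OF finite_subset[OF assms(2) finite_Estar[OF fV]]] Y'(2)
      by (simp add: Un_Estar_Diff[OF assms(2)])
    with Y'(3) show "ip_feasible V E f (indic Y)"
      by simp
  qed (use ip_feasible_indic_iff[OF assms] in blast)
  then show ?thesis
    unfolding ip_optimal_iff[OF assms(1)] miae_optimal_def ip_objective_indic[OF fV assms(2)]
      Un_Estar_Diff[OF assms(2)]
    by auto
qed

lemma miae_optimal_Diff_subset_Estar:
  assumes "simple_graph V E" "miae_optimal V E f E'"
  shows "E' - E \<subseteq> Estar V E f"
proof -
  have fV: "finite V" and E': "miae_feasible V E f E'"
    using assms by (auto simp: simple_graph_def miae_optimal_def)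
  obtain Y where Y: "Y \<subseteq> Estar V E f" "Y \<subseteq> E' - E" "ip_feasible V E f (indic Y)"
    using miae_feasible_obtain_ip_feasible_indic[OF assms(1) E'] .
  have "miae_feasible V E f (E \<union> Y)"
    using ip_feasible_indic_iff[OF assms(1) Y(1)] Y(3) by blast
  with assms(2) have "card (E' - E) \<le> card Y"
    using Un_Estar_Diff[OF Y(1)] by (auto simp: miae_optimal_def)
  moreover have "finite (E' - E)"
    using E' edges_on_finite[OF fV] by (auto simp: miae_feasible_def)
  ultimately have "Y = E' - E"
    using card_seteq[OF _ Y(2)] by blast
  with Y(1) show ?thesis
    by simp
qed

lemma ip_optimal_objective:
  assumes "simple_graph V E" "ip_optimal V E f y"
  shows "ip_objective V E f y = - int (Min {card (E' - E) | E'. miae_feasible V E f E'})"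
proof -
  have fV: "finite V"
    using assms(1) by (simp add: simple_graph_def)
  let ?Y = "{e \<in> Estar V E f. y e = 1}"
  have y: "ip_feasible V E f y" and bound:
    "\<forall>E'. miae_feasible V E f E' \<longrightarrow> - ip_objective V E f y \<le> int (card (E' - E))"
    using assms(2) ip_optimal_iff[OF assms(1)] by blast+
  have obj: "ip_objective V E f y = - int (card ?Y)"
    by (rule ip_feasible_support(2)[OF fV y])
  have "miae_feasible V E f (E \<union> ?Y)"
    using ip_feasible_support(1)[OF fV y] ip_feasible_indic_iff[OF assms(1), of ?Y] by blast
  moreover have "(E \<union> ?Y) - E = ?Y"
    by (rule Un_Estar_Diff) blast
  ultimately have "card ?Y \<in> {card (E' - E) | E'. miae_feasible V E f E'}"
    by (metis (mono_tags, lifting) mem_Collect_eq)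
  moreover have "card ?Y \<le> m" if "m \<in> {card (E' - E) | E'. miae_feasible V E f E'}" for m
    using that bound obj by auto
  ultimately have "Min {card (E' - E) | E'. miae_feasible V E f E'} = card ?Y"
    by (intro Min_eqI[OF finite_miae_costs[OF fV]])
  with obj show ?thesis
    by simp
qed

theorem mainTheorem6:
  fixes V :: "'a set" and E :: "'a set set" and f :: "'a \<Rightarrow> colour"
  assumes "simple_graph V E"
    and "card (blues V f) > card (reds V f)"
  shows "(\<forall>Y. Y \<subseteq> Estar V E f \<longrightarrow>
            (ip_optimal V E f (indic Y) \<longleftrightarrow> miae_optimal V E f (E \<union> Y)))
       \<and> (\<forall>E'. miae_optimal V E f E' \<longrightarrow> E' - E \<subseteq> Estar V E f)
       \<and> (\<exists>y. ip_optimal V E f y)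
       \<and> (\<forall>y. ip_optimal V E f y \<longrightarrow>
            ip_objective V E f y = - int (Min {card (E' - E) | E'. miae_feasible V E f E'}))"
proof -
  obtain E' where E': "miae_optimal V E f E'"
    using miae_optimal_exists[OF miae_feasible_Un_Estar[OF assms]] by blast
  then have "E \<union> (E' - E) = E'"
    by (auto simp: miae_optimal_def miae_feasible_def)
  with E' have "ip_optimal V E f (indic (E' - E))"
    using ip_optimal_indic_iff_miae_optimal[OF assms(1) miae_optimal_Diff_subset_Estar[OF assms(1) E']]
    by simp
  then have "\<exists>y. ip_optimal V E f y"
    by blast
  then show ?thesis
    using ip_optimal_indic_iff_miae_optimal[OF assms(1)] miae_optimal_Diff_subset_Estar[OF assms(1)]
      ip_optimal_objective[OF assms(1)]
    by (intro conjI allI impI) auto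
qed

end
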